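(* Let $M=(S,R,V)$ and $M'=(S',R',V')$ be finite epistemic models for the same finite set of agents $A$ and set of atoms $P$, such that only finitely many atoms are relevant in $M\cup M'$, and let $s\in S$, $s'\in S'$. Assume $(s,s)\in R(a)$ for every agent $a\in A$, and assume $M$ is a bisimulation contraction. Let $\mathsf{U}'_r=(S',R',\mathsf{pre},\mathsf{post})$ be the update model with event set $S'$, accessibility relations $R'(a)$, $\mathsf{pre}(t')=\delta_{(M,s)}$ for all $t'\in S'$, and, for every relevant atom $p$, $\mathsf{post}(t')(p)=\top$ if $t'\in V'(p)$ and $\bot$ otherwise (irrelevant atoms unchanged). Then $M\otimes\mathsf{U}'_r$ is isomorphic to $M'$.
   Context: An epistemic model is $M=(S,R,V)$ with $S$ a nonempty set, $R:A\to\wp(S\times S)$, $V:P\to\wp(S)$. An atom is relevant in a model if its valuation is neither empty nor the whole domain; "relevant in $M\cup M'$" refers to the disjoint union, so an irrelevant atom has the same constant value throughout both models. Bisimulation is the standard notion (atoms agree on linked states, forth and back conditions for each agent's relation); a bisimulation contraction is a model in which any two bisimilar states are identical. The language $\mathcal{L}$ has atoms, $\neg$, $\wedge$, modalities $[a]$, common knowledge modalities $[B^*]$ and update modalities $[\mathsf{U},\mathsf{e}]$. For a finite pointed model $(M,u)$, $\delta_{(M,u)}$ is a characteristic formula: for all formulas $\psi$, $(M,u)\models\psi$ iff $\delta_{(M,u)}\models\psi$. An update model $\mathsf{U}=(\mathsf{E},\mathsf{R},\mathsf{pre},\mathsf{post})$ has finite nonempty event set $\mathsf{E}$, relations $\mathsf{R}(a)\subseteq\mathsf{E}\times\mathsf{E}$,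 preconditions $\mathsf{pre}(\mathsf{e})\in\mathcal{L}$ and postconditions $\mathsf{post}(\mathsf{e}):P\to\mathcal{L}$ differing from the identity on finitely many atoms. The product $M\otimes\mathsf{U}$ has domain $\{(t,\mathsf{f}) : (M,t)\models\mathsf{pre}(\mathsf{f})\}$, $((t,\mathsf{f}),(u,\mathsf{g}))$ in the relation for $a$ iff $(t,u)\in R(a)$ and $(\mathsf{f},\mathsf{g})\in\mathsf{R}(a)$, and $(t,\mathsf{f})$ satisfies $p$ iff $(M,t)\models\mathsf{post}(\mathsf{f})(p)$. *)

theory Defs
  imports Main
begin

record ('a, 'p, 's) emodel =
  dom :: "'s set"
  rel :: "'a \<Rightarrow> ('s \<times> 's) set"
  val :: "'p \<Rightarrow> 's set"

definition epi_model :: "('a, 'p, 's) emodel \<Rightarrow> bool" where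
  "epi_model M \<longleftrightarrow> dom M \<noteq> {} \<and> (\<forall>a. rel M a \<subseteq> dom M \<times> dom M) \<and> (\<forall>p. val M p \<subseteq> dom M)"

definition finite_epi_model :: "('a, 'p, 's) emodel \<Rightarrow> bool" where
  "finite_epi_model M \<longleftrightarrow> epi_model M \<and> finite (dom M)"

text \<open>Update models occurring inside formulas have events drawn from nat:
  event set, relations, preconditions, postconditions, designated event.\<close>

datatype ('a, 'p) fm =
    Atom 'p
  | Neg "('a, 'p) fm"
  | Conj "('a, 'p) fm" "('a, 'p) fm"
  | K 'a "('a, 'p) fm"
  | CK "'a set" "('a, 'p) fm"
  | Upd "nat set" "'a \<Rightarrow> (nat \<times> nat) set" "nat \<Rightarrow> ('a, 'p) fm" "nat \<Rightarrow> 'p \<Rightarrow> ('a, 'p) fm" nat "('a, 'p) fm"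

primrec wf_fm :: "('a, 'p) fm \<Rightarrow> bool" where
  "wf_fm (Atom p) = True"
| "wf_fm (Neg \<phi>) = wf_fm \<phi>"
| "wf_fm (Conj \<phi> \<psi>) = (wf_fm \<phi> \<and> wf_fm \<psi>)"
| "wf_fm (K a \<phi>) = wf_fm \<phi>"
| "wf_fm (CK B \<phi>) = wf_fm \<phi>"
| "wf_fm (Upd E Rl pr po e \<phi>) =
     (finite E \<and> E \<noteq> {} \<and> e \<in> E \<and> (\<forall>a. Rl a \<subseteq> E \<times> E)
      \<and> (\<forall>f\<in>E. finite {p. po f p \<noteq> Atom p})
      \<and> (\<forall>f\<in>E. (\<lambda>x. wf_fm x) (pr f)) \<and> (\<forall>f\<in>E. \<forall>p. (\<lambda>x. wf_fm x) (po f p)) \<and> wf_fm \<phi>)"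

text \<open>Semantics.  To allow nested products without changing the state type,
  states are pairs of an original state and the list of events executed so far.\<close>


definition uprod ::
  "('a, 'p, 's \<times> nat list) emodel \<Rightarrow> nat set \<Rightarrow> ('a \<Rightarrow> (nat \<times> nat) set)
    \<Rightarrow> (nat \<Rightarrow> ('a, 'p, 's \<times> nat list) emodel \<Rightarrow> 's \<times> nat list \<Rightarrow> bool)
    \<Rightarrow> (nat \<Rightarrow> 'p \<Rightarrow> ('a, 'p, 's \<times> nat list) emodel \<Rightarrow> 's \<times> nat list \<Rightarrow> bool)
    \<Rightarrow> ('a, 'p, 's \<times> nat list) emodel" where
  "uprod M E Rl P Q =
    (let D = {(t, es @ [f]) | t es f. (t, es) \<in> dom M \<and> f \<in> E \<and> P f M (t, es)} in
     \<lparr> dom = D,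
       rel = (\<lambda>a. {((t, es @ [f]), (u, fs @ [g])) | t es f u fs g.
                    (t, es @ [f]) \<in> D \<and> (u, fs @ [g]) \<in> D \<and>
                    ((t, es), (u, fs)) \<in> rel M a \<and> (f, g) \<in> Rl a}),
       val = (\<lambda>p. {(t, es @ [f]) | t es f. (t, es @ [f]) \<in> D \<and> Q f p M (t, es)}) \<rparr>)"

primrec sat :: "('a, 'p) fm \<Rightarrow> ('a, 'p, 's \<times> nat list) emodel \<Rightarrow> 's \<times> nat list \<Rightarrow> bool" where
  "sat (Atom p) = (\<lambda>M w. w \<in> val M p)"
| "sat (Neg \<phi>) = (\<lambda>M w. \<not> sat \<phi> M w)"
| "sat (Conj \<phi> \<psi>) = (\<lambda>M w. sat \<phi> M w \<and> sat \<psi> M w)"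
| "sat (K a \<phi>) = (\<lambda>M w. \<forall>v. (w, v) \<in> rel M a \<longrightarrow> sat \<phi> M v)"
| "sat (CK B \<phi>) = (\<lambda>M w. \<forall>v. (w, v) \<in> (\<Union>a\<in>B. rel M a)\<^sup>* \<longrightarrow> sat \<phi> M v)"
| "sat (Upd E Rl pr po e \<phi>) = (\<lambda>M w.
     (\<lambda>x. sat x) (pr e) M w \<longrightarrow>
     sat \<phi> (uprod M E Rl (\<lambda>f. (\<lambda>x. sat x) (pr f)) (\<lambda>f p. (\<lambda>x. sat x) (po f p))) (fst w, snd w @ [e]))"

definition lift :: "('a, 'p, 's) emodel \<Rightarrow> ('a, 'p, 's \<times> nat list) emodel" where
  "lift M = \<lparr> dom = (\<lambda>t. (t, [])) ` dom M,
             rel = (\<lambda>a. {((t, []), (u, [])) | t u. (t, u) \<in> rel M a}),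
             val = (\<lambda>p. (\<lambda>t. (t, [])) ` val M p) \<rparr>"

definition models :: "('a, 'p, 's) emodel \<Rightarrow> 's \<Rightarrow> ('a, 'p) fm \<Rightarrow> bool" where
  "models M s \<phi> \<longleftrightarrow> sat \<phi> (lift M) (s, [])"

definition Top :: "('a, 'p) fm" where
  "Top = Neg (Conj (Atom undefined) (Neg (Atom undefined)))"

definition Bot :: "('a, 'p) fm" where
  "Bot = Neg Top"

definition bisimulation :: "('a, 'p, 's) emodel \<Rightarrow> ('a, 'p, 't) emodel \<Rightarrow> ('s \<times> 't) set \<Rightarrow> bool" where
  "bisimulation M N Z \<longleftrightarrow> Z \<subseteq> dom M \<times> dom N \<and>
    (\<forall>(s, t) \<in> Z.
       (\<forall>p. s \<in> val M p \<longleftrightarrow> t \<in> val N p) \<and>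
       (\<forall>a s'. (s, s') \<in> rel M a \<longrightarrow> (\<exists>t'. (t, t') \<in> rel N a \<and> (s', t') \<in> Z)) \<and>
       (\<forall>a t'. (t, t') \<in> rel N a \<longrightarrow> (\<exists>s'. (s, s') \<in> rel M a \<and> (s', t') \<in> Z)))"

definition bisimilar :: "('a, 'p, 's) emodel \<Rightarrow> 's \<Rightarrow> ('a, 'p, 't) emodel \<Rightarrow> 't \<Rightarrow> bool" where
  "bisimilar M s N t \<longleftrightarrow> (\<exists>Z. bisimulation M N Z \<and> (s, t) \<in> Z)"

definition bisim_contraction :: "('a, 'p, 's) emodel \<Rightarrow> bool" where
  "bisim_contraction M \<longleftrightarrow> (\<forall>s\<in>dom M. \<forall>t\<in>dom M. bisimilar M s M t \<longrightarrow> s = t)"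

definition relevant :: "('a, 'p, 's) emodel \<Rightarrow> ('a, 'p, 't) emodel \<Rightarrow> 'p \<Rightarrow> bool" where
  "relevant M N p \<longleftrightarrow>
     \<not> (val M p \<inter> dom M = {} \<and> val N p \<inter> dom N = {}) \<and>
     \<not> (dom M \<subseteq> val M p \<and> dom N \<subseteq> val N p)"

record ('a, 'p, 'e) umodel =
  ev :: "'e set"
  urel :: "'a \<Rightarrow> ('e \<times> 'e) set"
  pre :: "'e \<Rightarrow> ('a, 'p) fm"
  post :: "'e \<Rightarrow> 'p \<Rightarrow> ('a, 'p) fm"

definition update_model :: "('a, 'p, 'e) umodel \<Rightarrow> bool" where
  "update_model U \<longleftrightarrow> finite (ev U) \<and> ev U \<noteq> {} \<and> (\<forall>a. urel U a \<subseteq> ev U \<times> ev U)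
     \<and> (\<forall>e\<in>ev U. wf_fm (pre U e) \<and> (\<forall>p. wf_fm (post U e p)) \<and> finite {p. post U e p \<noteq> Atom p})"

definition product :: "('a, 'p, 's) emodel \<Rightarrow> ('a, 'p, 'e) umodel \<Rightarrow> ('a, 'p, 's \<times> 'e) emodel" where
  "product M U =
    (let D = {(t, f). t \<in> dom M \<and> f \<in> ev U \<and> models M t (pre U f)} in
     \<lparr> dom = D,
       rel = (\<lambda>a. {((t, f), (u, g)). (t, f) \<in> D \<and> (u, g) \<in> D \<and> (t, u) \<in> rel M a \<and> (f, g) \<in> urel U a}),
       val = (\<lambda>p. {(t, f). (t, f) \<in> D \<and> models M t (post U f p)}) \<rparr>)"

definition isomorphic :: "('a, 'p, 's) emodel \<Rightarrow> ('a, 'p, 't) emodel \<Rightarrow> bool" where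
  "isomorphic M N \<longleftrightarrow> (\<exists>f. bij_betw f (dom M) (dom N) \<and>
     (\<forall>a. \<forall>x\<in>dom M. \<forall>y\<in>dom M. (x, y) \<in> rel M a \<longleftrightarrow> (f x, f y) \<in> rel N a) \<and>
     (\<forall>p. \<forall>x\<in>dom M. x \<in> val M p \<longleftrightarrow> f x \<in> val N p))"

definition Ur :: "('a, 'p, 's) emodel \<Rightarrow> ('a, 'p, 't) emodel \<Rightarrow> ('a, 'p) fm \<Rightarrow> ('a, 'p, 't) umodel" where
  "Ur M N \<delta> = \<lparr> ev = dom N, urel = rel N, pre = (\<lambda>_. \<delta>),
     post = (\<lambda>t p. if relevant M N p then (if t \<in> val N p then Top else Bot) else Atom p) \<rparr>"

end

theory Submission
  imports Defs
begin

text \<open>Since \<open>\<delta>\<close> characterizes \<open>(M, s)\<close>, every state of \<open>M\<close> satisfying \<open>\<delta>\<close> is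
  modally equivalent to \<open>s\<close>; by the Hennessy-Milner theorem for image-finite models it is
  bisimilar to \<open>s\<close>, hence equal to \<open>s\<close> because \<open>M\<close> is a bisimulation contraction.  So the
  product \<open>M \<otimes> U'\<^sub>r\<close> consists of the pairs \<open>(s, t')\<close> with \<open>t' \<in> S'\<close>: the reflexive loops at
  \<open>s\<close> let the event relations \<open>R'\<close> through unchanged, and the postconditions assign to
  \<open>(s, t')\<close> the relevant atoms of \<open>t'\<close>, while every irrelevant atom is constant on both
  models.\<close>

lemma models_Atom: "models M t (Atom p) \<longleftrightarrow> t \<in> val M p"
  by (auto simp: models_def lift_def)

lemma models_Neg: "models M t (Neg \<phi>) \<longleftrightarrow> \<not> models M t \<phi>"
  by (simp add: models_def)

lemma models_Conj: "models M t (Conj \<phi> \<psi>) \<longleftrightarrow> models M t \<phi> \<and> models M t \<psi>"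
  by (simp add: models_def)

lemma models_K: "models M t (K a \<phi>) \<longleftrightarrow> (\<forall>u. (t, u) \<in> rel M a \<longrightarrow> models M u \<phi>)"
  by (auto simp: models_def lift_def)

lemma models_Top: "models M t Top"
  by (simp add: models_def Top_def)

lemma models_Bot: "\<not> models M t Bot"
  by (simp add: models_def Bot_def Top_def)

definition Conj_list :: "('a, 'p) fm list \<Rightarrow> ('a, 'p) fm" where
  "Conj_list \<phi>s = foldr Conj \<phi>s Top"

lemma models_Conj_list: "models M t (Conj_list \<phi>s) \<longleftrightarrow> (\<forall>\<phi>\<in>set \<phi>s. models M t \<phi>)"
  unfolding Conj_list_def by (induction \<phi>s) (auto simp: models_Conj models_Top)

lemma wf_fm_Conj_list: "(\<forall>\<phi>\<in>set \<phi>s. wf_fm \<phi>) \<Longrightarrow> wf_fm (Conj_list \<phi>s)"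
  unfolding Conj_list_def by (induction \<phi>s) (auto simp: Top_def)

definition modally_equivalent :: "('a, 'p, 's) emodel \<Rightarrow> 's \<Rightarrow> 's \<Rightarrow> bool" where
  "modally_equivalent M t u \<longleftrightarrow> (\<forall>\<psi>. wf_fm \<psi> \<longrightarrow> (models M t \<psi> \<longleftrightarrow> models M u \<psi>))"

lemma modally_equivalent_sym: "modally_equivalent M t u \<Longrightarrow> modally_equivalent M u t"
  unfolding modally_equivalent_def by blast

lemma not_modally_equivalentE:
  assumes "\<not> modally_equivalent M t u"
  obtains \<psi> where "wf_fm \<psi>" "models M t \<psi>" "\<not> models M u \<psi>"
proof -
  from assms obtain \<psi> where "wf_fm \<psi>" "models M t \<psi> \<noteq> models M u \<psi>"
    unfolding modally_equivalent_def by blast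
  then show thesis
    using that[of \<psi>] that[of "Neg \<psi>"] by (auto simp: models_Neg)
qed

lemma modally_equivalent_forth:
  assumes image_finite: "finite (rel M a `` {u})"
    and equiv: "modally_equivalent M t u" and step: "(t, t') \<in> rel M a"
  shows "\<exists>u'. (u, u') \<in> rel M a \<and> modally_equivalent M t' u'"
proof (rule ccontr)
  assume "\<not> ?thesis"
  then have "\<forall>u'\<in>rel M a `` {u}. \<exists>\<psi>. wf_fm \<psi> \<and> models M t' \<psi> \<and> \<not> models M u' \<psi>"
    by (metis Image_singleton_iff not_modally_equivalentE)
  then obtain \<chi> where \<chi>: "\<And>u'. u' \<in> rel M a `` {u} \<Longrightarrow>
      wf_fm (\<chi> u') \<and> models M t' (\<chi> u') \<and> \<not> models M u' (\<chi> u')"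
    by metis
  obtain us where us: "set us = rel M a `` {u}"
    using finite_list[OF image_finite] by blast
  \<comment> \<open>\<open>\<Phi>\<close> holds at \<open>t'\<close> but at no \<open>a\<close>-successor of \<open>u\<close>, so \<open>K a (Neg \<Phi>)\<close> separates \<open>u\<close> from \<open>t\<close>.\<close>
  define \<Phi> where "\<Phi> = Conj_list (map \<chi> us)"
  have "wf_fm (K a (Neg \<Phi>))"
    unfolding \<Phi>_def using \<chi> us by (auto intro!: wf_fm_Conj_list)
  moreover have "\<not> models M t (K a (Neg \<Phi>))"
    unfolding \<Phi>_def using \<chi> us step by (auto simp: models_K models_Neg models_Conj_list)
  moreover have "models M u (K a (Neg \<Phi>))"
    unfolding \<Phi>_def using \<chi> us by (auto simp: models_K models_Neg models_Conj_list)
  ultimately show False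
    using equiv unfolding modally_equivalent_def by blast
qed

lemma modally_equivalent_imp_bisimilar:
  assumes M: "epi_model M" and image_finite: "\<And>a x. finite (rel M a `` {x})"
    and "t \<in> dom M" "u \<in> dom M" "modally_equivalent M t u"
  shows "bisimilar M t M u"
proof -
  define Z where "Z = {(x, y). x \<in> dom M \<and> y \<in> dom M \<and> modally_equivalent M x y}"
  have in_Z: "(x, y) \<in> Z \<longleftrightarrow> x \<in> dom M \<and> y \<in> dom M \<and> modally_equivalent M x y" for x y
    unfolding Z_def by simp
  have succ_dom: "y \<in> dom M" if "(x, y) \<in> rel M a" for x y a
    using M that unfolding epi_model_def by blast
  have atoms: "x \<in> val M p \<longleftrightarrow> y \<in> val M p" if "modally_equivalent M x y" for x y p
    using that unfolding modally_equivalent_def by (metis models_Atom wf_fm.simps(1))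
  have Z_forth: "\<exists>y'. (y, y') \<in> rel M a \<and> (x', y') \<in> Z"
    if equiv: "modally_equivalent M x y" and step: "(x, x') \<in> rel M a" for x y x' a
  proof -
    obtain y' where "(y, y') \<in> rel M a" "modally_equivalent M x' y'"
      using modally_equivalent_forth[OF image_finite equiv step] by blast
    then show ?thesis
      using succ_dom[OF step] succ_dom[of y y' a] in_Z by blast
  qed
  have Z_sym: "(y, x) \<in> Z" if "(x, y) \<in> Z" for x y
    using that unfolding in_Z by (auto intro: modally_equivalent_sym)
  have "bisimulation M M Z"
    unfolding bisimulation_def
  proof (intro conjI ballI)
    show "Z \<subseteq> dom M \<times> dom M"
      using in_Z by auto
  next
    fix z assume "z \<in> Z"
    then obtain x y where z: "z = (x, y)" and xy: "modally_equivalent M x y"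
      using in_Z by (cases z) auto
    have Z_back: "\<exists>x'. (x, x') \<in> rel M a \<and> (x', y') \<in> Z" if "(y, y') \<in> rel M a" for a y'
      using Z_forth[OF modally_equivalent_sym[OF xy] that] Z_sym by blast
    show "case z of (x, y) \<Rightarrow>
       (\<forall>p. x \<in> val M p \<longleftrightarrow> y \<in> val M p) \<and>
       (\<forall>a x'. (x, x') \<in> rel M a \<longrightarrow> (\<exists>y'. (y, y') \<in> rel M a \<and> (x', y') \<in> Z)) \<and>
       (\<forall>a y'. (y, y') \<in> rel M a \<longrightarrow> (\<exists>x'. (x, x') \<in> rel M a \<and> (x', y') \<in> Z))"
      using atoms[OF xy] Z_forth[OF xy] Z_back z by simp
  qed
  moreover have "(t, u) \<in> Z"
    using assms in_Z by blast
  ultimately show ?thesis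
    unfolding bisimilar_def by blast
qed

definition characteristic_formula :: "('a, 'p) fm \<Rightarrow> ('a, 'p, 's) emodel \<Rightarrow> 's \<Rightarrow> bool" where
  "characteristic_formula \<delta> M s \<longleftrightarrow> (\<forall>\<psi>. wf_fm \<psi> \<longrightarrow>
     (models M s \<psi> \<longleftrightarrow>
      (\<forall>(N :: ('a, 'p, 's) emodel) v. epi_model N \<and> v \<in> dom N \<and> models N v \<delta> \<longrightarrow> models N v \<psi>)))"

lemma characteristic_formula_models:
  "characteristic_formula \<delta> M s \<Longrightarrow> wf_fm \<delta> \<Longrightarrow> models M s \<delta>"
  unfolding characteristic_formula_def by blast

lemma characteristic_formula_modally_equivalent:
  assumes "characteristic_formula \<delta> M s" and "epi_model M" "t \<in> dom M" "models M t \<delta>"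
  shows "modally_equivalent M s t"
proof -
  have entails: "models M t \<psi>" if "wf_fm \<psi>" "models M s \<psi>" for \<psi>
    using assms that unfolding characteristic_formula_def by blast
  have "models M s \<psi> \<longleftrightarrow> models M t \<psi>" if "wf_fm \<psi>" for \<psi>
    using that entails[of \<psi>] entails[of "Neg \<psi>"] by (auto simp: models_Neg)
  then show ?thesis
    unfolding modally_equivalent_def by blast
qed

lemma bisim_contraction_characteristic_formula_unique:
  assumes char: "characteristic_formula \<delta> M s" and "wf_fm \<delta>"
    and fin: "finite_epi_model M" and contr: "bisim_contraction M" and s: "s \<in> dom M"
  shows "{t \<in> dom M. models M t \<delta>} = {s}"
proof -
  have M: "epi_model M"
    using fin unfolding finite_epi_model_def by blast
  have image_finite: "finite (rel M a `` {x})" for a x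
  proof (rule finite_subset)
    show "rel M a `` {x} \<subseteq> dom M"
      using M unfolding epi_model_def by blast
    show "finite (dom M)"
      using fin unfolding finite_epi_model_def by blast
  qed
  have "t = s" if t: "t \<in> dom M" and t_models: "models M t \<delta>" for t
  proof -
    have "modally_equivalent M s t"
      using characteristic_formula_modally_equivalent[OF char M t t_models] .
    then have "bisimilar M s M t"
      using modally_equivalent_imp_bisimilar[OF M image_finite s t] by blast
    then show ?thesis
      using contr s t unfolding bisim_contraction_def by blast
  qed
  then show ?thesis
    using characteristic_formula_models[OF char \<open>wf_fm \<delta>\<close>] s by blast
qed

lemma dom_product: "dom (product M U) = {(t, f). t \<in> dom M \<and> f \<in> ev U \<and> models M t (pre U f)}"
  by (simp add: product_def Let_def)

lemma rel_product: "rel (product M U) a = {((t, f), (u, g)).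
    (t, f) \<in> dom (product M U) \<and> (u, g) \<in> dom (product M U) \<and> (t, u) \<in> rel M a \<and> (f, g) \<in> urel U a}"
  by (simp add: product_def Let_def)

lemma val_product: "val (product M U) p = {(t, f). (t, f) \<in> dom (product M U) \<and> models M t (post U f p)}"
  by (simp add: product_def Let_def)

lemma Ur_simps:
  "ev (Ur M N \<delta>) = dom N" "urel (Ur M N \<delta>) = rel N" "pre (Ur M N \<delta>) f = \<delta>"
  "post (Ur M N \<delta>) f p = (if relevant M N p then (if f \<in> val N p then Top else Bot) else Atom p)"
  by (simp_all add: Ur_def)

lemma dom_product_Ur:
  assumes "{t \<in> dom M. models M t \<delta>} = {s}"
  shows "dom (product M (Ur M N \<delta>)) = Pair s ` dom N"
  using assms unfolding dom_product Ur_simps by auto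

lemma product_Ur_isomorphic:
  assumes unique: "{t \<in> dom M. models M t \<delta>} = {s}" and loops: "\<forall>a. (s, s) \<in> rel M a"
  shows "isomorphic (product M (Ur M N \<delta>)) N"
  unfolding isomorphic_def
proof (intro exI[of _ snd] conjI allI ballI)
  let ?P = "product M (Ur M N \<delta>)"
  note dom_P = dom_product_Ur[OF unique]
  have s: "s \<in> dom M"
    using unique by blast
  show "bij_betw snd (dom ?P) (dom N)"
    unfolding dom_P by (auto simp: bij_betw_def inj_on_def image_image)
  fix x assume x: "x \<in> dom ?P"
  then obtain f where x_def: "x = (s, f)" and f: "f \<in> dom N"
    unfolding dom_P by auto
  {
    fix a y assume "y \<in> dom ?P"
    then obtain g where "y = (s, g)"
      unfolding dom_P by auto
    then show "(x, y) \<in> rel ?P a \<longleftrightarrow> (snd x, snd y) \<in> rel N a"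
      using x \<open>y \<in> dom ?P\<close> loops unfolding rel_product Ur_simps x_def by auto
  }
  fix p
  show "x \<in> val ?P p \<longleftrightarrow> snd x \<in> val N p"
  proof (cases "relevant M N p")
    case True
    then show ?thesis
      using x unfolding val_product Ur_simps x_def by (auto simp: models_Top models_Bot)
  next
    case False
    then have "s \<in> val M p \<longleftrightarrow> f \<in> val N p"
      using f s unfolding relevant_def by blast
    then show ?thesis
      using x False unfolding val_product Ur_simps x_def by (auto simp: models_Atom)
  qed
qed

text \<open>The hypotheses on \<open>M'\<close>, \<open>s'\<close>, the agents and the relevant atoms are only needed for
  \<open>U'\<^sub>r\<close> to be an update model; the isomorphism does not use them.\<close>

theorem corollary1:
  fixes M :: "('a::finite, 'p, 's) emodel" and M' :: "('a, 'p, 's') emodel"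
    and s :: 's and s' :: 's' and \<delta> :: "('a, 'p) fm"
  assumes "finite_epi_model M" and "finite_epi_model M'"
    and "finite {p. relevant M M' p}"
    and "s \<in> dom M" and "s' \<in> dom M'"
    and "\<forall>a. (s, s) \<in> rel M a"
    and "bisim_contraction M"
    and "wf_fm \<delta>"
    and "\<forall>\<psi>. wf_fm \<psi> \<longrightarrow>
           (models M s \<psi> \<longleftrightarrow>
            (\<forall>(N :: ('a, 'p, 's) emodel) v. epi_model N \<and> v \<in> dom N \<and> models N v \<delta> \<longrightarrow> models N v \<psi>))"
  shows "isomorphic (product M (Ur M M' \<delta>)) M'"
proof -
  have "characteristic_formula \<delta> M s"
    using assms(9) unfolding characteristic_formula_def .
  then have "{t \<in> dom M. models M t \<delta>} = {s}"
    by (rule bisim_contraction_characteristic_formula_unique[OF _ assms(8,1,7,4)])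
  then show ?thesis
    by (rule product_Ur_isomorphic[OF _ assms(6)])
qed

end
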